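(* Let $\lambda\in\mathbb R$, let $\phi:Z\to[-\infty,+\infty]$ be proper and closed, and suppose Assumptions (A1) and (A3)(i) hold. Let $w$ be the solution of $\mathrm{EVIs}_\lambda(X,Y,\phi)$ with $\lim_{t\downarrow0}w_t=w_0\in\overline{D\phi}$. If $\phi$ admits a saddle point $w^*=(x^*,y^* )$, then $\mathsf d_Z^2(w_t,w^* )\le e^{-2\lambda t}\mathsf d_Z^2(w_0,w^* )$ for every $t>0$.
   Context: $(X,\mathsf d_X)$, $(Y,\mathsf d_Y)$ complete metric spaces; $Z=X\times Y$ with $\mathsf d_Z=(\mathsf d_X^2+\mathsf d_Y^2)^{1/2}$. $D_X\phi=\{x:\phi(x,y)<+\infty\ \forall y\}$, $D_Y\phi=\{y:\phi(x,y)>-\infty\ \forall x\}$, $D\phi=D_X\phi\times D_Y\phi$; proper: $D\phi\ne\emptyset$. Closed: for $x\in D_X\phi$, $y\mapsto\phi(x,y)$ upper semicontinuous; for $y\in D_Y\phi$, $x\mapsto\phi(x,y)$ lower semicontinuous. (A1): $\phi=+\infty$ on $(X\setminus D_X\phi)\times D_Y\phi$, $\phi=-\infty$ on $D_X\phi\times(Y\setminus D_Y\phi)$. (A3)(i): there exist continuous $\varphi:Z\to\mathbb R$, lower semicontinuous $\psi_X:X\to(-\infty,+\infty]$, upper semicontinuous $\psi_Y:Y\to[-\infty,+\infty)$ with $\phi=\varphi+\psi_X+\psi_Y$ on $D\phi$. A saddle point is $(x^*,y^* )\in Z$ with $\phi(x^*,y)\le\phi(x^*,y^* )\le\phi(x,y^*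 )$ for all $(x,y)\in Z$. A solution of $\mathrm{EVIs}_\lambda(X,Y,\phi)$ is a pair of continuous curves $(u,v):(0,+\infty)\to D\phi$ with, for all $t>0$, $(x,y)\in D\phi$: $\frac12\frac{d^+}{dt}\mathsf d_X^2(u_t,x)+\frac\lambda2\mathsf d_X^2(u_t,x)+\phi(u_t,v_t)\le\phi(x,v_t)$ and $\frac12\frac{d^+}{dt}\mathsf d_Y^2(v_t,y)+\frac\lambda2\mathsf d_Y^2(v_t,y)+\phi(u_t,y)\le\phi(u_t,v_t)$, with $\frac{d^+}{dt}f(t)=\limsup_{h\downarrow0}(f(t+h)-f(t))/h$. *)

theory Defs
  imports "HOL-Analysis.Analysis"
begin

definition lsc :: "('a::topological_space \<Rightarrow> ereal) \<Rightarrow> bool" where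
  "lsc f \<longleftrightarrow> (\<forall>x. f x \<le> Liminf (at x) f)"

definition usc :: "('a::topological_space \<Rightarrow> ereal) \<Rightarrow> bool" where
  "usc f \<longleftrightarrow> (\<forall>x. Limsup (at x) f \<le> f x)"

definition DX :: "('a \<Rightarrow> 'b \<Rightarrow> ereal) \<Rightarrow> 'a set" where
  "DX \<phi> = {x. \<forall>y. \<phi> x y < \<infinity>}"

definition DY :: "('a \<Rightarrow> 'b \<Rightarrow> ereal) \<Rightarrow> 'b set" where
  "DY \<phi> = {y. \<forall>x. \<phi> x y > -\<infinity>}"

definition Dphi :: "('a \<Rightarrow> 'b \<Rightarrow> ereal) \<Rightarrow> ('a \<times> 'b) set" where
  "Dphi \<phi> = DX \<phi> \<times> DY \<phi>"

definition proper_saddle :: "('a \<Rightarrow> 'b \<Rightarrow> ereal) \<Rightarrow> bool" where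
  "proper_saddle \<phi> \<longleftrightarrow> Dphi \<phi> \<noteq> {}"

definition closed_saddle ::
  "('a::topological_space \<Rightarrow> 'b::topological_space \<Rightarrow> ereal) \<Rightarrow> bool" where
  "closed_saddle \<phi> \<longleftrightarrow>
     (\<forall>x\<in>DX \<phi>. usc (\<lambda>y. \<phi> x y)) \<and> (\<forall>y\<in>DY \<phi>. lsc (\<lambda>x. \<phi> x y))"

definition assumption_A1 :: "('a \<Rightarrow> 'b \<Rightarrow> ereal) \<Rightarrow> bool" where
  "assumption_A1 \<phi> \<longleftrightarrow>
     (\<forall>x\<in>-DX \<phi>. \<forall>y\<in>DY \<phi>. \<phi> x y = \<infinity>) \<and>
     (\<forall>x\<in>DX \<phi>. \<forall>y\<in>-DY \<phi>. \<phi> x y = -\<infinity>)"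

definition assumption_A3i ::
  "('a::topological_space \<Rightarrow> 'b::topological_space \<Rightarrow> ereal) \<Rightarrow> bool" where
  "assumption_A3i \<phi> \<longleftrightarrow>
     (\<exists>(\<phi>0::'a \<times> 'b \<Rightarrow> real) (\<psi>X::'a \<Rightarrow> ereal) (\<psi>Y::'b \<Rightarrow> ereal).
        continuous_on UNIV \<phi>0 \<and>
        (\<forall>x. \<psi>X x \<noteq> -\<infinity>) \<and> lsc \<psi>X \<and>
        (\<forall>y. \<psi>Y y \<noteq> \<infinity>) \<and> usc \<psi>Y \<and>
        (\<forall>(x,y)\<in>Dphi \<phi>. \<phi> x y = ereal (\<phi>0 (x,y)) + \<psi>X x + \<psi>Y y))"

definition saddle_point :: "('a \<Rightarrow> 'b \<Rightarrow> ereal) \<Rightarrow> 'a \<Rightarrow> 'b \<Rightarrow> bool" where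
  "saddle_point \<phi> xs ys \<longleftrightarrow> (\<forall>x y. \<phi> xs y \<le> \<phi> xs ys \<and> \<phi> xs ys \<le> \<phi> x ys)"

definition upper_dini :: "(real \<Rightarrow> real) \<Rightarrow> real \<Rightarrow> ereal" where
  "upper_dini f t = Limsup (at_right 0) (\<lambda>h. ereal ((f (t + h) - f t) / h))"

definition EVIs_solution ::
  "real \<Rightarrow> ('a::metric_space \<Rightarrow> 'b::metric_space \<Rightarrow> ereal) \<Rightarrow>
   (real \<Rightarrow> 'a) \<Rightarrow> (real \<Rightarrow> 'b) \<Rightarrow> bool" where
  "EVIs_solution lam \<phi> u v \<longleftrightarrow>
     continuous_on {0<..} u \<and> continuous_on {0<..} v \<and>
     (\<forall>t>0. (u t, v t) \<in> Dphi \<phi>) \<and>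
     (\<forall>t>0. \<forall>(x,y)\<in>Dphi \<phi>.
        ereal (1/2) * upper_dini (\<lambda>s. (dist (u s) x)\<^sup>2) t
          + ereal (lam/2 * (dist (u t) x)\<^sup>2) + \<phi> (u t) (v t) \<le> \<phi> x (v t) \<and>
        ereal (1/2) * upper_dini (\<lambda>s. (dist (v s) y)\<^sup>2) t
          + ereal (lam/2 * (dist (v t) y)\<^sup>2) + \<phi> (u t) y \<le> \<phi> (u t) (v t))"

end

theory Submission
  imports Defs
begin

(* Adding the two EVIs tested at a point (x, y) of the domain gives
     (1/2) d+/dt [d^2(u, x) + d^2(v, y)] <= phi(x, v) - phi(u, y) - (lam/2) [d^2(u, x) + d^2(v, y)].
   At the saddle point (xs, ys) the first difference is <= 0, so for lam > 0 the flow converges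
   to it.  Testing with (xs, y) and letting t -> oo, lower semicontinuity of phi(., y) at xs shows
   that phi(xs, .) decays quadratically away from ys: phi(xs, y) <= phi(xs, ys) - (lam/2) d^2(y, ys);
   otherwise the squared distance would eventually decrease at a fixed rate and become negative.
   Symmetrically phi(x, ys) >= phi(xs, ys) + (lam/2) d^2(x, xs).  With these two bounds the
   squared distance F to the saddle point satisfies d+/dt F <= -2 lam F, and a Gronwall lemma for
   upper Dini derivatives, followed by the limit at t = 0, gives the estimate. *)

section \<open>Upper Dini derivatives\<close>

lemma upper_dini_le_iff:
  "upper_dini f t \<le> ereal L \<longleftrightarrow> (\<forall>M>L. \<forall>\<^sub>F h in at_right 0. (f (t + h) - f t) / h < M)"
  unfolding upper_dini_def Limsup_le_iff
proof (intro iffI allI impI)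
  fix M assume bound: "\<forall>y>ereal L. \<forall>\<^sub>F h in at_right 0. y > ereal ((f (t + h) - f t) / h)"
    and "L < M"
  have "\<forall>\<^sub>F h in at_right 0. ereal M > ereal ((f (t + h) - f t) / h)"
    using bound[rule_format, of "ereal M"] \<open>L < M\<close> by simp
  then show "\<forall>\<^sub>F h in at_right 0. (f (t + h) - f t) / h < M" by simp
next
  fix y assume "\<forall>M>L. \<forall>\<^sub>F h in at_right 0. (f (t + h) - f t) / h < M" and "ereal L < y"
  then show "\<forall>\<^sub>F h in at_right 0. y > ereal ((f (t + h) - f t) / h)"
    by (cases y) (auto elim: eventually_mono)
qed

lemma upper_dini_add_le:
  assumes "upper_dini f t \<le> ereal L" "upper_dini g t \<le> ereal K"
  shows "upper_dini (\<lambda>s. f s + g s) t \<le> ereal (L + K)"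
  unfolding upper_dini_le_iff
proof (intro allI impI)
  fix M assume "L + K < M"
  then have "\<forall>\<^sub>F h in at_right 0. (f (t + h) - f t) / h < L + (M - L - K) / 2"
    and "\<forall>\<^sub>F h in at_right 0. (g (t + h) - g t) / h < K + (M - L - K) / 2"
    using assms by (auto simp: upper_dini_le_iff)
  then show "\<forall>\<^sub>F h in at_right 0. (f (t + h) + g (t + h) - (f t + g t)) / h < M"
    by eventually_elim (simp add: diff_divide_distrib add_divide_distrib)
qed

lemma upper_dini_linear: "upper_dini (\<lambda>s. c * s) t = ereal c"
proof -
  have "\<forall>\<^sub>F h in at_right 0. ereal ((c * (t + h) - c * t) / h) = ereal c"
    using eventually_at_right_less[of 0] by eventually_elim (simp add: field_simps)
  then have "((\<lambda>h. ereal ((c * (t + h) - c * t) / h)) \<longlongrightarrow> ereal c) (at_right 0)"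
    by (rule tendsto_eventually)
  then show ?thesis
    unfolding upper_dini_def by (intro lim_imp_Limsup) auto
qed

text \<open>The largest \<open>m \<le> t\<close> with \<open>H m \<le> H s\<close> must be \<open>t\<close>, since \<open>H\<close> decreases immediately
  to the right of any such \<open>m < t\<close>.\<close>

lemma upper_dini_neg_imp_nonincreasing:
  fixes H :: "real \<Rightarrow> real"
  assumes "s \<le> t" and cont: "continuous_on {s..t} H"
    and neg: "\<And>r. s \<le> r \<Longrightarrow> r < t \<Longrightarrow> upper_dini H r < 0"
  shows "H t \<le> H s"
proof -
  define S where "S = {s..t} \<inter> H -` {..H s}"
  have "closed S"
    unfolding S_def by (rule continuous_closed_preimage[OF cont]) auto
  then have "compact S"
    using compact_Int_closed[OF compact_Icc, of S s t] by (simp add: S_def Int_assoc)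
  moreover have "s \<in> S" using \<open>s \<le> t\<close> by (simp add: S_def)
  ultimately obtain m where "m \<in> S" and max: "\<And>r. r \<in> S \<Longrightarrow> r \<le> m"
    using compact_attains_sup[of S] by blast
  have "m = t"
  proof (rule ccontr)
    assume "m \<noteq> t"
    with \<open>m \<in> S\<close> have m: "s \<le> m" "m < t" "H m \<le> H s" by (auto simp: S_def)
    have "\<forall>\<^sub>F h in at_right 0. ereal ((H (m + h) - H m) / h) < 0"
      using neg[OF m(1,2)] unfolding upper_dini_def by (rule Limsup_lessD)
    then have "\<forall>\<^sub>F h in at_right 0. (H (m + h) - H m) / h < 0"
      by (simp add: zero_ereal_def)
    moreover have "\<forall>\<^sub>F h in at_right 0. 0 < h \<and> h < t - m"
      unfolding eventually_at_right_field using m(2) by (intro exI[of _ "t - m"]) auto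
    ultimately have "\<forall>\<^sub>F h in at_right 0. (H (m + h) - H m) / h < 0 \<and> 0 < h \<and> h < t - m"
      by (rule eventually_conj)
    then obtain h where h: "(H (m + h) - H m) / h < 0" "0 < h" "h < t - m"
      using eventually_happens'[OF trivial_limit_at_right_real] by blast
    then have "m + h \<in> S" using m by (simp add: S_def divide_less_0_iff)
    with max h(2) show False by fastforce
  qed
  with \<open>m \<in> S\<close> show ?thesis by (simp add: S_def)
qed

lemma upper_dini_le_imp_le_linear:
  fixes F :: "real \<Rightarrow> real"
  assumes "s \<le> t" and cont: "continuous_on {s..t} F"
    and bound: "\<And>r. s \<le> r \<Longrightarrow> r < t \<Longrightarrow> upper_dini F r \<le> ereal K"
  shows "F t \<le> F s + K * (t - s)"
proof (rule field_le_epsilon)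
  fix e :: real assume "e > 0"
  define \<epsilon> where "\<epsilon> = e / (t - s + 1)"
  have "\<epsilon> > 0" using \<open>e > 0\<close> \<open>s \<le> t\<close> by (simp add: \<epsilon>_def)
  have "F t + - (K + \<epsilon>) * t \<le> F s + - (K + \<epsilon>) * s"
  proof (rule upper_dini_neg_imp_nonincreasing[OF \<open>s \<le> t\<close>])
    show "continuous_on {s..t} (\<lambda>r. F r + - (K + \<epsilon>) * r)"
      by (intro continuous_intros cont)
    fix r assume "s \<le> r" "r < t"
    have "upper_dini (\<lambda>r. F r + - (K + \<epsilon>) * r) r \<le> ereal (K + - (K + \<epsilon>))"
      using bound[OF \<open>s \<le> r\<close> \<open>r < t\<close>] by (intro upper_dini_add_le) (simp_all add: upper_dini_linear)
    also have "\<dots> < 0" using \<open>\<epsilon> > 0\<close> by (simp add: zero_ereal_def)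
    finally show "upper_dini (\<lambda>r. F r + - (K + \<epsilon>) * r) r < 0" .
  qed
  moreover have "\<epsilon> * (t - s) \<le> e"
    using \<open>e > 0\<close> \<open>s \<le> t\<close> by (simp add: \<epsilon>_def field_simps)
  ultimately show "F t \<le> F s + K * (t - s) + e"
    by (simp add: algebra_simps)
qed

lemma upper_dini_mult_le:
  assumes f: "upper_dini f t \<le> ereal L"
    and g: "(g has_real_derivative g') (at t)" and "0 < g t"
  shows "upper_dini (\<lambda>s. g s * f s) t \<le> ereal (g t * L + g' * f t)"
  unfolding upper_dini_le_iff
proof (intro allI impI)
  fix M assume M: "g t * L + g' * f t < M"
  define \<delta> where "\<delta> = (M - (g t * L + g' * f t)) / (2 * g t)"
  have "\<delta> > 0" using M \<open>0 < g t\<close> by (simp add: \<delta>_def)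
  have "g t * (L + \<delta>) = g t * L + (M - (g t * L + g' * f t)) / 2"
    using \<open>0 < g t\<close> by (simp add: \<delta>_def field_simps)
  then have "g t * (L + \<delta>) + f t * g' < M"
    using M by (simp add: algebra_simps)
  have g_cont: "((\<lambda>h. g (t + h)) \<longlongrightarrow> g t) (at_right 0)"
    using LIM_offset_zero[OF DERIV_isCont[OF g, unfolded isCont_def]]
    by (rule tendsto_mono[OF at_le[OF subset_UNIV], rotated])
  have g_quot: "((\<lambda>h. (g (t + h) - g t) / h) \<longlongrightarrow> g') (at_right 0)"
    using DERIV_D[OF g] by (rule tendsto_mono[OF at_le[OF subset_UNIV], rotated])
  have "((\<lambda>h. g (t + h) * (L + \<delta>) + f t * ((g (t + h) - g t) / h))
      \<longlongrightarrow> g t * (L + \<delta>) + f t * g') (at_right 0)"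
    by (intro tendsto_intros g_cont g_quot)
  from order_tendstoD(2)[OF this \<open>g t * (L + \<delta>) + f t * g' < M\<close>]
  have "\<forall>\<^sub>F h in at_right 0. g (t + h) * (L + \<delta>) + f t * ((g (t + h) - g t) / h) < M" .
  moreover have "\<forall>\<^sub>F h in at_right 0. (f (t + h) - f t) / h < L + \<delta>"
    using f \<open>\<delta> > 0\<close> by (simp add: upper_dini_le_iff)
  moreover have "\<forall>\<^sub>F h in at_right 0. 0 < g (t + h)"
    using order_tendstoD(1)[OF g_cont \<open>0 < g t\<close>] .
  moreover have "\<forall>\<^sub>F h in at_right (0::real). 0 < h"
    by (rule eventually_at_right_less)
  ultimately show "\<forall>\<^sub>F h in at_right 0. (g (t + h) * f (t + h) - g t * f t) / h < M"
  proof eventually_elim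
    case (elim h)
    have "(g (t + h) * f (t + h) - g t * f t) / h
        = g (t + h) * ((f (t + h) - f t) / h) + f t * ((g (t + h) - g t) / h)"
      using \<open>0 < h\<close> by (simp add: field_simps)
    also have "\<dots> \<le> g (t + h) * (L + \<delta>) + f t * ((g (t + h) - g t) / h)"
      using elim(2,3) by (intro add_right_mono mult_left_mono) auto
    finally show ?case using elim(1) by simp
  qed
qed

lemma upper_dini_gronwall:
  fixes F :: "real \<Rightarrow> real"
  assumes "s \<le> t" and cont: "continuous_on {s..t} F"
    and bound: "\<And>r. s \<le> r \<Longrightarrow> r < t \<Longrightarrow> upper_dini F r \<le> ereal (c * F r)"
  shows "F t \<le> exp (c * (t - s)) * F s"
proof -
  have "exp (- c * t) * F t \<le> exp (- c * s) * F s + 0 * (t - s)"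
  proof (rule upper_dini_le_imp_le_linear[OF \<open>s \<le> t\<close>])
    show "continuous_on {s..t} (\<lambda>r. exp (- c * r) * F r)"
      by (intro continuous_intros cont)
    fix r assume "s \<le> r" "r < t"
    have "((\<lambda>r. exp (- c * r)) has_real_derivative - c * exp (- c * r)) (at r)"
      by (auto intro!: derivative_eq_intros)
    from upper_dini_mult_le[OF bound[OF \<open>s \<le> r\<close> \<open>r < t\<close>] this exp_gt_zero]
    show "upper_dini (\<lambda>r. exp (- c * r) * F r) r \<le> ereal 0"
      by (simp add: algebra_simps)
  qed
  then have "exp (c * t) * (exp (- c * t) * F t) \<le> exp (c * t) * (exp (- c * s) * F s)"
    by simp
  then show ?thesis
    by (simp add: exp_minus right_diff_distrib exp_diff field_simps)
qed

lemma eventually_upper_dini_le_neg_imp_ex_neg: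
  fixes F :: "real \<Rightarrow> real"
  assumes cont: "continuous_on {a..} F"
    and "\<forall>\<^sub>F r in at_top. upper_dini F r \<le> ereal (- \<eta>)" and "\<eta> > 0"
  shows "\<exists>t\<ge>a. F t < 0"
proof -
  obtain R where "R \<ge> a" and R: "\<And>r. r \<ge> R \<Longrightarrow> upper_dini F r \<le> ereal (- \<eta>)"
    using assms(2) unfolding eventually_at_top_linorder by (metis max.cobounded1 max.cobounded2 order_trans)
  define t where "t = R + (\<bar>F R\<bar> + 1) / \<eta>"
  have "R \<le> t" using \<open>\<eta> > 0\<close> by (simp add: t_def)
  have "F t \<le> F R + - \<eta> * (t - R)"
  proof (rule upper_dini_le_imp_le_linear[OF \<open>R \<le> t\<close>])
    show "continuous_on {R..t} F"
      using cont by (rule continuous_on_subset) (use \<open>R \<ge> a\<close> in auto)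
  qed (use R in auto)
  also have "\<dots> = F R - \<bar>F R\<bar> - 1"
    using \<open>\<eta> > 0\<close> by (simp add: t_def field_simps)
  finally have "F t < 0" by simp
  then show ?thesis using \<open>R \<le> t\<close> \<open>R \<ge> a\<close> order_trans by blast
qed

section \<open>Saddle EVI flows with real values\<close>

lemma lsc_imp_eventually_gt:
  assumes "lsc f" "c < f x"
  shows "\<forall>\<^sub>F y in nhds x. c < f y"
proof -
  have "c < Liminf (at x) f"
    using assms unfolding lsc_def by (metis less_le_trans)
  then have "\<forall>\<^sub>F y in at x. c < f y"
    by (rule less_LiminfD)
  then show ?thesis
    using \<open>c < f x\<close> by (auto simp: eventually_at_filter elim: eventually_mono)
qed

lemma usc_imp_eventually_lt:
  assumes "usc f" "f x < c"
  shows "\<forall>\<^sub>F y in nhds x. f y < c"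
proof -
  have "Limsup (at x) f < c"
    using assms unfolding usc_def by (metis le_less_trans)
  then have "\<forall>\<^sub>F y in at x. f y < c"
    by (rule Limsup_lessD)
  then show ?thesis
    using \<open>f x < c\<close> by (auto simp: eventually_at_filter elim: eventually_mono)
qed

text \<open>\<open>\<Phi>\<close> plays the role of \<open>\<phi>\<close> on \<open>A \<times> B = D\<phi>\<close>, where \<open>\<phi>\<close> is real-valued; the EVIs are
  stated multiplied by 2, and only semicontinuity of \<open>\<Phi>\<close> at the saddle point is kept.\<close>

locale saddle_evi_flow =
  fixes lam :: real
    and \<Phi> :: "'a::metric_space \<Rightarrow> 'b::metric_space \<Rightarrow> real"
    and A :: "'a set" and B :: "'b set"
    and u :: "real \<Rightarrow> 'a" and v :: "real \<Rightarrow> 'b"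
    and xs :: 'a and ys :: 'b
  assumes cont_u: "continuous_on {0<..} u" and cont_v: "continuous_on {0<..} v"
    and u_in: "t > 0 \<Longrightarrow> u t \<in> A" and v_in: "t > 0 \<Longrightarrow> v t \<in> B"
    and evi_x: "t > 0 \<Longrightarrow> x \<in> A \<Longrightarrow> upper_dini (\<lambda>s. (dist (u s) x)\<^sup>2) t
      \<le> ereal (2 * (\<Phi> x (v t) - \<Phi> (u t) (v t)) - lam * (dist (u t) x)\<^sup>2)"
    and evi_y: "t > 0 \<Longrightarrow> y \<in> B \<Longrightarrow> upper_dini (\<lambda>s. (dist (v s) y)\<^sup>2) t
      \<le> ereal (2 * (\<Phi> (u t) (v t) - \<Phi> (u t) y) - lam * (dist (v t) y)\<^sup>2)"
    and saddle_in: "xs \<in> A" "ys \<in> B"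
    and saddle_le: "x \<in> A \<Longrightarrow> \<Phi> xs ys \<le> \<Phi> x ys"
    and saddle_ge: "y \<in> B \<Longrightarrow> \<Phi> xs y \<le> \<Phi> xs ys"
    and lsc_at_saddle: "y \<in> B \<Longrightarrow> c < \<Phi> xs y \<Longrightarrow> \<forall>\<^sub>F x in nhds xs. x \<in> A \<longrightarrow> c < \<Phi> x y"
    and usc_at_saddle: "x \<in> A \<Longrightarrow> \<Phi> x ys < c \<Longrightarrow> \<forall>\<^sub>F y in nhds ys. y \<in> B \<longrightarrow> \<Phi> x y < c"
begin

definition sq_dist_to :: "'a \<Rightarrow> 'b \<Rightarrow> real \<Rightarrow> real" where
  "sq_dist_to x y t = (dist (u t) x)\<^sup>2 + (dist (v t) y)\<^sup>2"

lemma sq_dist_to_nonneg: "0 \<le> sq_dist_to x y t"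
  by (simp add: sq_dist_to_def)

lemma continuous_on_sq_dist_to: "continuous_on {0<..} (sq_dist_to x y)"
  unfolding sq_dist_to_def by (intro continuous_intros cont_u cont_v)

lemma upper_dini_sq_dist_to:
  assumes "t > 0" "x \<in> A" "y \<in> B"
  shows "upper_dini (sq_dist_to x y) t \<le> ereal (2 * (\<Phi> x (v t) - \<Phi> (u t) y) - lam * sq_dist_to x y t)"
proof -
  have "upper_dini (sq_dist_to x y) t
      \<le> ereal ((2 * (\<Phi> x (v t) - \<Phi> (u t) (v t)) - lam * (dist (u t) x)\<^sup>2)
        + (2 * (\<Phi> (u t) (v t) - \<Phi> (u t) y) - lam * (dist (v t) y)\<^sup>2))"
    unfolding sq_dist_to_def[abs_def] by (intro upper_dini_add_le evi_x evi_y assms)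
  then show ?thesis
    by (simp add: sq_dist_to_def algebra_simps)
qed

lemma sq_dist_to_saddle_decay:
  assumes "0 < s" "s \<le> t"
  shows "sq_dist_to xs ys t \<le> exp (- lam * (t - s)) * sq_dist_to xs ys s"
proof (rule upper_dini_gronwall[OF \<open>s \<le> t\<close>])
  show "continuous_on {s..t} (sq_dist_to xs ys)"
    using continuous_on_sq_dist_to by (rule continuous_on_subset) (use \<open>0 < s\<close> in auto)
  fix r assume "s \<le> r" "r < t"
  then have "r > 0" using \<open>0 < s\<close> by simp
  have "\<Phi> xs (v r) \<le> \<Phi> (u r) ys"
    using saddle_ge[OF v_in] saddle_le[OF u_in] \<open>r > 0\<close> by (meson order_trans)
  then show "upper_dini (sq_dist_to xs ys) r \<le> ereal (- lam * sq_dist_to xs ys r)"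
    using upper_dini_sq_dist_to[OF \<open>r > 0\<close> saddle_in] by (elim order_trans) simp
qed

lemma tendsto_saddle:
  assumes "lam > 0"
  shows "(u \<longlongrightarrow> xs) at_top" and "(v \<longlongrightarrow> ys) at_top"
proof -
  have shift: "filterlim (\<lambda>t::real. t - 1) at_top at_top"
    using filterlim_tendsto_add_at_top[OF tendsto_const[of "-1"] filterlim_ident] by simp
  have "filterlim (\<lambda>t. - lam * (t - 1)) at_bot at_top"
    by (rule filterlim_tendsto_neg_mult_at_bot[OF tendsto_const _ shift]) (use \<open>lam > 0\<close> in simp)
  then have bound_lim: "((\<lambda>t. exp (- lam * (t - 1)) * sq_dist_to xs ys 1) \<longlongrightarrow> 0) at_top"
    by (rule tendsto_mult_left_zero[OF filterlim_compose[OF exp_at_bot]])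
  have bound: "\<forall>\<^sub>F t in at_top. sq_dist_to xs ys t \<le> exp (- lam * (t - 1)) * sq_dist_to xs ys 1"
    using eventually_ge_at_top[of 1] by eventually_elim (rule sq_dist_to_saddle_decay, auto)
  have "(sq_dist_to xs ys \<longlongrightarrow> 0) at_top"
    by (rule tendsto_sandwich[OF always_eventually bound tendsto_const bound_lim])
      (simp add: sq_dist_to_nonneg)
  then have sqrt_lim: "((\<lambda>t. sqrt (sq_dist_to xs ys t)) \<longlongrightarrow> 0) at_top"
    using tendsto_real_sqrt[of "sq_dist_to xs ys" 0] by simp
  have u_le: "\<forall>t. dist (u t) xs \<le> sqrt (sq_dist_to xs ys t)"
    and v_le: "\<forall>t. dist (v t) ys \<le> sqrt (sq_dist_to xs ys t)"
    unfolding sq_dist_to_def by (auto intro: real_le_rsqrt)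
  have "((\<lambda>t. dist (u t) xs) \<longlongrightarrow> 0) at_top"
    by (rule tendsto_sandwich[OF always_eventually always_eventually tendsto_const sqrt_lim])
      (simp, fact u_le)
  then show "(u \<longlongrightarrow> xs) at_top"
    by (rule tendsto_dist_iff[THEN iffD2])
  have "((\<lambda>t. dist (v t) ys) \<longlongrightarrow> 0) at_top"
    by (rule tendsto_sandwich[OF always_eventually always_eventually tendsto_const sqrt_lim])
      (simp, fact v_le)
  then show "(v \<longlongrightarrow> ys) at_top"
    by (rule tendsto_dist_iff[THEN iffD2])
qed


lemma saddle_concave_growth:
  assumes "y \<in> B"
  shows "\<Phi> xs y \<le> \<Phi> xs ys - lam / 2 * (dist y ys)\<^sup>2"
proof (cases "lam > 0")
  case False
  then have "lam / 2 * (dist y ys)\<^sup>2 \<le> 0"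
    by (simp add: mult_nonpos_nonneg)
  with saddle_ge[OF assms] show ?thesis by linarith
next
  case True
  show ?thesis
  proof (rule ccontr)
    assume contra: "\<not> ?thesis"
    define \<eta> where "\<eta> = (\<Phi> xs y - \<Phi> xs ys + lam / 2 * (dist y ys)\<^sup>2) / 2"
    have "\<eta> > 0" using contra by (simp add: \<eta>_def)
    have gap: "lam * (dist y ys)\<^sup>2 = 4 * \<eta> - 2 * (\<Phi> xs y - \<Phi> xs ys)"
      by (simp add: \<eta>_def field_simps)
    have "(sq_dist_to xs y \<longlongrightarrow> (dist xs xs)\<^sup>2 + (dist ys y)\<^sup>2) at_top"
      unfolding sq_dist_to_def[abs_def] by (intro tendsto_intros tendsto_saddle True)
    then have "((\<lambda>r. lam * sq_dist_to xs y r) \<longlongrightarrow> lam * (dist y ys)\<^sup>2) at_top"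
      by (simp add: dist_commute tendsto_mult_left)
    from order_tendstoD(1)[OF this, of "lam * (dist y ys)\<^sup>2 - \<eta>"]
    have near_sq_dist: "\<forall>\<^sub>F r in at_top. lam * (dist y ys)\<^sup>2 - \<eta> < lam * sq_dist_to xs y r"
      using \<open>\<eta> > 0\<close> by simp
    have "\<forall>\<^sub>F r in at_top. u r \<in> A \<longrightarrow> \<Phi> xs y - \<eta> / 2 < \<Phi> (u r) y"
      using lsc_at_saddle[OF assms, of "\<Phi> xs y - \<eta> / 2"] \<open>\<eta> > 0\<close>
      by (intro eventually_compose_filterlim[OF _ tendsto_saddle(1)[OF True]]) simp
    then have near_\<Phi>: "\<forall>\<^sub>F r in at_top. \<Phi> xs y - \<eta> / 2 < \<Phi> (u r) y"
      using eventually_gt_at_top[of 0] by eventually_elim (simp add: u_in)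
    have "\<forall>\<^sub>F r in at_top. upper_dini (sq_dist_to xs y) r \<le> ereal (- \<eta>)"
      using near_sq_dist near_\<Phi> eventually_gt_at_top[of 0]
    proof eventually_elim
      case (elim r)
      have "upper_dini (sq_dist_to xs y) r
          \<le> ereal (2 * (\<Phi> xs (v r) - \<Phi> (u r) y) - lam * sq_dist_to xs y r)"
        using upper_dini_sq_dist_to[OF \<open>r > 0\<close> saddle_in(1) assms] .
      also have "\<dots> \<le> ereal (- \<eta>)"
        unfolding ereal_less_eq(3) using saddle_ge[OF v_in[OF \<open>r > 0\<close>]] elim gap \<open>\<eta> > 0\<close>
        by argo
      finally show ?case .
    qed
    then obtain t where "sq_dist_to xs y t < 0"
      using eventually_upper_dini_le_neg_imp_ex_neg[OF _ _ \<open>\<eta> > 0\<close>, of 1]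
        continuous_on_subset[OF continuous_on_sq_dist_to, of "{1..}"] by fastforce
    then show False
      using sq_dist_to_nonneg[of xs y t] by simp
  qed
qed

lemma saddle_convex_growth:
  assumes "x \<in> A"
  shows "\<Phi> xs ys + lam / 2 * (dist x xs)\<^sup>2 \<le> \<Phi> x ys"
proof -
  \<comment> \<open>the \<open>x\<close>-direction is the \<open>y\<close>-direction of the flow \<open>(v, u)\<close> for \<open>(y, x) \<mapsto> -\<Phi> x y\<close>\<close>
  interpret swapped: saddle_evi_flow lam "\<lambda>y x. - \<Phi> x y" B A v u ys xs
  proof unfold_locales
    fix t :: real and y assume "t > 0" "y \<in> B"
    from evi_y[OF this] show "upper_dini (\<lambda>s. (dist (v s) y)\<^sup>2) t
        \<le> ereal (2 * (- \<Phi> (u t) y - - \<Phi> (u t) (v t)) - lam * (dist (v t) y)\<^sup>2)"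
      by (simp add: algebra_simps)
  next
    fix t :: real and x assume "t > 0" "x \<in> A"
    from evi_x[OF this] show "upper_dini (\<lambda>s. (dist (u s) x)\<^sup>2) t
        \<le> ereal (2 * (- \<Phi> (u t) (v t) - - \<Phi> x (v t)) - lam * (dist (u t) x)\<^sup>2)"
      by (simp add: algebra_simps)
  next
    fix x c assume "x \<in> A" "c < - \<Phi> x ys"
    from usc_at_saddle[OF this(1), of "- c"] this(2)
    show "\<forall>\<^sub>F y in nhds ys. y \<in> B \<longrightarrow> c < - \<Phi> x y"
      by (auto elim!: eventually_mono)
  next
    fix y c assume "y \<in> B" "- \<Phi> xs y < c"
    from lsc_at_saddle[OF this(1), of "- c"] this(2)
    show "\<forall>\<^sub>F x in nhds xs. x \<in> A \<longrightarrow> - \<Phi> x y < c"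
      by (auto elim!: eventually_mono)
  qed (use cont_u cont_v u_in v_in saddle_in saddle_le saddle_ge in auto)
  from swapped.saddle_concave_growth[OF assms] show ?thesis
    by simp
qed

lemma sq_dist_to_saddle_contraction:
  assumes "0 < s" "s \<le> t"
  shows "sq_dist_to xs ys t \<le> exp (- 2 * lam * (t - s)) * sq_dist_to xs ys s"
proof (rule upper_dini_gronwall[OF \<open>s \<le> t\<close>])
  show "continuous_on {s..t} (sq_dist_to xs ys)"
    using continuous_on_sq_dist_to by (rule continuous_on_subset) (use \<open>0 < s\<close> in auto)
  fix r assume "s \<le> r" "r < t"
  then have "r > 0" using \<open>0 < s\<close> by simp
  have "\<Phi> xs (v r) - \<Phi> (u r) ys \<le> - lam / 2 * sq_dist_to xs ys r"
    using saddle_concave_growth[OF v_in] saddle_convex_growth[OF u_in] \<open>r > 0\<close>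
    by (fastforce simp: sq_dist_to_def algebra_simps dist_commute)
  then show "upper_dini (sq_dist_to xs ys) r \<le> ereal (- 2 * lam * sq_dist_to xs ys r)"
    using upper_dini_sq_dist_to[OF \<open>r > 0\<close> saddle_in] by (elim order_trans) simp
qed

lemma dist_saddle_contraction:
  assumes w0: "((\<lambda>t. (u t, v t)) \<longlongrightarrow> w0) (at_right 0)" and "t > 0"
  shows "(dist (u t, v t) (xs, ys))\<^sup>2 \<le> exp (- 2 * lam * t) * (dist w0 (xs, ys))\<^sup>2"
proof -
  have sq: "sq_dist_to xs ys r = (dist (u r, v r) (xs, ys))\<^sup>2" for r
    unfolding sq_dist_to_def dist_Pair_Pair by simp
  have "((\<lambda>s. exp (- 2 * lam * (t - s)) * sq_dist_to xs ys s)
      \<longlongrightarrow> exp (- 2 * lam * (t - 0)) * (dist w0 (xs, ys))\<^sup>2) (at_right 0)"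
    unfolding sq by (intro tendsto_intros w0)
  moreover have "\<forall>\<^sub>F s in at_right 0. sq_dist_to xs ys t \<le> exp (- 2 * lam * (t - s)) * sq_dist_to xs ys s"
    using eventually_at_right_real[OF \<open>t > 0\<close>]
    by eventually_elim (rule sq_dist_to_saddle_contraction; simp)
  ultimately have "sq_dist_to xs ys t \<le> exp (- 2 * lam * (t - 0)) * (dist w0 (xs, ys))\<^sup>2"
    by (rule tendsto_lowerbound) simp
  then show ?thesis
    by (simp add: sq)
qed

end


section \<open>The extended-real setting\<close>

lemma saddle_point_in_Dphi:
  assumes "proper_saddle \<phi>" "assumption_A1 \<phi>" "saddle_point \<phi> xs ys"
  shows "xs \<in> DX \<phi>" and "ys \<in> DY \<phi>"
proof -
  obtain x0 y0 where "x0 \<in> DX \<phi>" "y0 \<in> DY \<phi>"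
    using assms(1) unfolding proper_saddle_def Dphi_def by auto
  have saddle: "\<phi> xs y \<le> \<phi> xs ys" "\<phi> xs ys \<le> \<phi> x ys" for x y
    using assms(3) unfolding saddle_point_def by auto
  show "xs \<in> DX \<phi>"
  proof (rule ccontr)
    assume "xs \<notin> DX \<phi>"
    then have "\<phi> xs y0 = \<infinity>"
      using assms(2) \<open>y0 \<in> DY \<phi>\<close> unfolding assumption_A1_def by auto
    then have "\<phi> x0 ys = \<infinity>"
      using saddle(1)[of y0] saddle(2)[of x0] by simp
    with \<open>x0 \<in> DX \<phi>\<close> show False
      unfolding DX_def by auto
  qed
  show "ys \<in> DY \<phi>"
  proof (rule ccontr)
    assume "ys \<notin> DY \<phi>"
    then have "\<phi> x0 ys = - \<infinity>"
      using assms(2) \<open>x0 \<in> DX \<phi>\<close> unfolding assumption_A1_def by auto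
    then have "\<phi> xs y0 = - \<infinity>"
      using saddle(1)[of y0] saddle(2)[of x0] by simp
    with \<open>y0 \<in> DY \<phi>\<close> show False
      unfolding DY_def by auto
  qed
qed

lemma ereal_real_of_ereal_on_Dphi:
  assumes "x \<in> DX \<phi>" "y \<in> DY \<phi>"
  shows "ereal (real_of_ereal (\<phi> x y)) = \<phi> x y"
  using assms unfolding DX_def DY_def by (cases "\<phi> x y") auto

lemma ereal_half_add_le_imp_le:
  assumes "ereal (1/2) * d + ereal a \<le> ereal b"
  shows "d \<le> ereal (2 * (b - a))"
  using assms by (cases d) auto

lemma EVIs_solution_imp_saddle_evi_flow:
  assumes "proper_saddle \<phi>" "closed_saddle \<phi>" "assumption_A1 \<phi>"
    and sol: "EVIs_solution lam \<phi> u v" and "saddle_point \<phi> xs ys"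
  shows "saddle_evi_flow lam (\<lambda>x y. real_of_ereal (\<phi> x y)) (DX \<phi>) (DY \<phi>) u v xs ys"
proof -
  let ?\<Phi> = "\<lambda>x y. real_of_ereal (\<phi> x y)"
  have xs: "xs \<in> DX \<phi>" and ys: "ys \<in> DY \<phi>"
    using saddle_point_in_Dphi[OF assms(1,3,5)] by auto
  have sol_in: "u t \<in> DX \<phi>" "v t \<in> DY \<phi>" if "t > 0" for t
    using sol that unfolding EVIs_solution_def Dphi_def by auto
  have evi: "ereal (1/2) * upper_dini (\<lambda>s. (dist (u s) x)\<^sup>2) t
          + ereal (lam/2 * (dist (u t) x)\<^sup>2) + \<phi> (u t) (v t) \<le> \<phi> x (v t)"
      "ereal (1/2) * upper_dini (\<lambda>s. (dist (v s) y)\<^sup>2) t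
          + ereal (lam/2 * (dist (v t) y)\<^sup>2) + \<phi> (u t) y \<le> \<phi> (u t) (v t)"
    if "t > 0" "x \<in> DX \<phi>" "y \<in> DY \<phi>" for t x y
    using sol that unfolding EVIs_solution_def Dphi_def by auto
  have saddle: "\<phi> xs y \<le> \<phi> xs ys" "\<phi> xs ys \<le> \<phi> x ys" for x y
    using assms(5) unfolding saddle_point_def by auto
  have lsc: "lsc (\<lambda>x. \<phi> x y)" if "y \<in> DY \<phi>" for y
    using assms(2) that unfolding closed_saddle_def by blast
  have usc: "usc (\<lambda>y. \<phi> x y)" if "x \<in> DX \<phi>" for x
    using assms(2) that unfolding closed_saddle_def by blast
  note finite = ereal_real_of_ereal_on_Dphi
  show ?thesis
  proof unfold_locales
    fix t :: real and x assume "t > 0" "x \<in> DX \<phi>"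
    have "ereal (1/2) * upper_dini (\<lambda>s. (dist (u s) x)\<^sup>2) t + ereal (lam/2 * (dist (u t) x)\<^sup>2)
        + ereal (?\<Phi> (u t) (v t)) \<le> ereal (?\<Phi> x (v t))"
      using evi(1)[OF \<open>t > 0\<close> \<open>x \<in> DX \<phi>\<close> ys] sol_in[OF \<open>t > 0\<close>] \<open>x \<in> DX \<phi>\<close>
      by (simp add: finite)
    then have "upper_dini (\<lambda>s. (dist (u s) x)\<^sup>2) t
        \<le> ereal (2 * (?\<Phi> x (v t) - (lam/2 * (dist (u t) x)\<^sup>2 + ?\<Phi> (u t) (v t))))"
      by (intro ereal_half_add_le_imp_le) (simp add: add.assoc)
    then show "upper_dini (\<lambda>s. (dist (u s) x)\<^sup>2) t
        \<le> ereal (2 * (?\<Phi> x (v t) - ?\<Phi> (u t) (v t)) - lam * (dist (u t) x)\<^sup>2)"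
      by (simp add: algebra_simps)
  next
    fix t :: real and y assume "t > 0" "y \<in> DY \<phi>"
    have "ereal (1/2) * upper_dini (\<lambda>s. (dist (v s) y)\<^sup>2) t + ereal (lam/2 * (dist (v t) y)\<^sup>2)
        + ereal (?\<Phi> (u t) y) \<le> ereal (?\<Phi> (u t) (v t))"
      using evi(2)[OF \<open>t > 0\<close> xs \<open>y \<in> DY \<phi>\<close>] sol_in[OF \<open>t > 0\<close>] \<open>y \<in> DY \<phi>\<close>
      by (simp add: finite)
    then have "upper_dini (\<lambda>s. (dist (v s) y)\<^sup>2) t
        \<le> ereal (2 * (?\<Phi> (u t) (v t) - (lam/2 * (dist (v t) y)\<^sup>2 + ?\<Phi> (u t) y)))"
      by (intro ereal_half_add_le_imp_le) (simp add: add.assoc)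
    then show "upper_dini (\<lambda>s. (dist (v s) y)\<^sup>2) t
        \<le> ereal (2 * (?\<Phi> (u t) (v t) - ?\<Phi> (u t) y) - lam * (dist (v t) y)\<^sup>2)"
      by (simp add: algebra_simps)
  next
    fix x assume "x \<in> DX \<phi>"
    then have "ereal (?\<Phi> xs ys) \<le> ereal (?\<Phi> x ys)"
      using saddle(2) xs ys by (simp add: finite)
    then show "?\<Phi> xs ys \<le> ?\<Phi> x ys" by simp
  next
    fix y assume "y \<in> DY \<phi>"
    then have "ereal (?\<Phi> xs y) \<le> ereal (?\<Phi> xs ys)"
      using saddle(1) xs ys by (simp add: finite)
    then show "?\<Phi> xs y \<le> ?\<Phi> xs ys" by simp
  next
    fix y c assume "y \<in> DY \<phi>" "c < ?\<Phi> xs y"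
    then have "ereal c < \<phi> xs y"
      using finite[OF xs \<open>y \<in> DY \<phi>\<close>] by (metis less_ereal.simps(1))
    then have "\<forall>\<^sub>F x in nhds xs. ereal c < \<phi> x y"
      by (rule lsc_imp_eventually_gt[OF lsc[OF \<open>y \<in> DY \<phi>\<close>]])
    then show "\<forall>\<^sub>F x in nhds xs. x \<in> DX \<phi> \<longrightarrow> c < ?\<Phi> x y"
      by eventually_elim (metis finite \<open>y \<in> DY \<phi>\<close> less_ereal.simps(1))
  next
    fix x c assume "x \<in> DX \<phi>" "?\<Phi> x ys < c"
    then have "\<phi> x ys < ereal c"
      using finite[OF \<open>x \<in> DX \<phi>\<close> ys] by (metis less_ereal.simps(1))
    then have "\<forall>\<^sub>F y in nhds ys. \<phi> x y < ereal c"
      by (rule usc_imp_eventually_lt[OF usc[OF \<open>x \<in> DX \<phi>\<close>]])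
    then show "\<forall>\<^sub>F y in nhds ys. y \<in> DY \<phi> \<longrightarrow> ?\<Phi> x y < c"
      by eventually_elim (metis finite \<open>x \<in> DX \<phi>\<close> less_ereal.simps(1))
  qed (use sol xs ys sol_in in \<open>simp_all add: EVIs_solution_def\<close>)
qed

theorem mainTheorem6:
  fixes lam :: real
    and \<phi> :: "'a::complete_space \<Rightarrow> 'b::complete_space \<Rightarrow> ereal"
    and u :: "real \<Rightarrow> 'a" and v :: "real \<Rightarrow> 'b"
    and w0 :: "'a \<times> 'b" and xs :: 'a and ys :: 'b
  assumes "proper_saddle \<phi>" and "closed_saddle \<phi>"
    and "assumption_A1 \<phi>" and "assumption_A3i \<phi>"
    and "EVIs_solution lam \<phi> u v"
    and "((\<lambda>t. (u t, v t)) \<longlongrightarrow> w0) (at_right 0)"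
    and "w0 \<in> closure (Dphi \<phi>)"
    and "saddle_point \<phi> xs ys"
  shows "\<forall>t>0. (dist (u t, v t) (xs, ys))\<^sup>2 \<le> exp (- 2 * lam * t) * (dist w0 (xs, ys))\<^sup>2"
proof -
  interpret saddle_evi_flow lam "\<lambda>x y. real_of_ereal (\<phi> x y)" "DX \<phi>" "DY \<phi>" u v xs ys
    using EVIs_solution_imp_saddle_evi_flow[OF assms(1-3,5,8)] .
  show ?thesis
    using dist_saddle_contraction[OF assms(6)] by blast
qed

end
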